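(* Let $G$ be a graph with no induced $P_7$, $C_4$, $C_6$ or $C_7$, let $H=(B_1,\dots,B_5)$ be a nice blowup of $C_5$ in $G$, and let $i\in\{1,\dots,5\}$. If $a-b-c$ is an induced path in $G[A_2(i)]$, then $N_{A'_3(j)}(a)\subseteq N_{A'_3(j)}(b)$ and $N_{A'_3(j)}(c)\subseteq N_{A'_3(j)}(b)$ for each $j\in\{i,i+1\}$.
   Context: Indices modulo $5$. A nice blowup of $C_5$ is a tuple $(B_1,\dots,B_5)$ of pairwise disjoint cliques such that every vertex of $B_j$ has a neighbor in $B_{j-1}$ and in $B_{j+1}$, $B_j$ is anticomplete to $B_{j+2}$, and there are no $a\in B_j$, distinct $b,c\in B_{j+1}$, $d\in B_{j+2}$ with $G[\{a,b,c,d\}]\cong P_4$; $V(H)=\bigcup B_j$. For $v\notin V(H)$, $\operatorname{supp}(v)$ is the set of $j$ such that $v$ has a neighbor in $B_j$. $A_2(i)=\{v\notin V(H):\operatorname{supp}(v)=\{i,i+1\}\}$, $A_3(j)=\{v\notin V(H):\operatorname{supp}(v)=\{j-1,j,j+1\}\}$, $A'_3(j)=A_3(j)\cup B_j$; $N_S(v)$ denotes the neighbors of $v$ in $S$. *)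

theory Defs
  imports Main
begin

definition graph :: "'a set \<Rightarrow> ('a \<Rightarrow> 'a \<Rightarrow> bool) \<Rightarrow> bool" where
  "graph V E \<longleftrightarrow> finite V \<and> (\<forall>x y. E x y \<longrightarrow> x \<in> V \<and> y \<in> V)
     \<and> (\<forall>x y. E x y \<longrightarrow> E y x) \<and> (\<forall>x. \<not> E x x)"

definition induced_path :: "'a set \<Rightarrow> ('a \<Rightarrow> 'a \<Rightarrow> bool) \<Rightarrow> 'a list \<Rightarrow> bool" where
  "induced_path V E vs \<longleftrightarrow> distinct vs \<and> set vs \<subseteq> V \<and>
     (\<forall>i<length vs. \<forall>j<length vs. E (vs!i) (vs!j) \<longleftrightarrow> (i = j + 1 \<or> j = i + 1))"

definition induced_cycle :: "'a set \<Rightarrow> ('a \<Rightarrow> 'a \<Rightarrow> bool) \<Rightarrow> 'a list \<Rightarrow> bool" where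
  "induced_cycle V E vs \<longleftrightarrow> distinct vs \<and> set vs \<subseteq> V \<and>
     (\<forall>i<length vs. \<forall>j<length vs. E (vs!i) (vs!j) \<longleftrightarrow>
        (i = (j + 1) mod length vs \<or> j = (i + 1) mod length vs) \<and> i \<noteq> j)"

definition has_induced_P :: "'a set \<Rightarrow> ('a \<Rightarrow> 'a \<Rightarrow> bool) \<Rightarrow> nat \<Rightarrow> bool" where
  "has_induced_P V E n \<longleftrightarrow> (\<exists>vs. length vs = n \<and> induced_path V E vs)"

definition has_induced_C :: "'a set \<Rightarrow> ('a \<Rightarrow> 'a \<Rightarrow> bool) \<Rightarrow> nat \<Rightarrow> bool" where
  "has_induced_C V E n \<longleftrightarrow> (\<exists>vs. length vs = n \<and> induced_cycle V E vs)"

definition clique :: "('a \<Rightarrow> 'a \<Rightarrow> bool) \<Rightarrow> 'a set \<Rightarrow> bool" where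
  "clique E S \<longleftrightarrow> (\<forall>x\<in>S. \<forall>y\<in>S. x \<noteq> y \<longrightarrow> E x y)"

definition anticomplete :: "('a \<Rightarrow> 'a \<Rightarrow> bool) \<Rightarrow> 'a set \<Rightarrow> 'a set \<Rightarrow> bool" where
  "anticomplete E S T \<longleftrightarrow> (\<forall>x\<in>S. \<forall>y\<in>T. \<not> E x y)"

text \<open>Blowup of C_5 indexed by 0..4, indices taken mod 5 (B j means B (j mod 5)).
  G[{a,b,c,d}] isomorphic to P_4: some ordering of these four vertices is an induced path.\<close>
definition nice_blowup_C5 :: "'a set \<Rightarrow> ('a \<Rightarrow> 'a \<Rightarrow> bool) \<Rightarrow> (nat \<Rightarrow> 'a set) \<Rightarrow> bool" where
  "nice_blowup_C5 V E B \<longleftrightarrow>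
     (\<forall>j. B j = B (j mod 5)) \<and>
     (\<forall>j<5. B j \<subseteq> V \<and> clique E (B j)) \<and>
     (\<forall>j<5. \<forall>k<5. j \<noteq> k \<longrightarrow> B j \<inter> B k = {}) \<and>
     (\<forall>j<5. \<forall>v\<in>B j. (\<exists>u\<in>B (j + 4). E v u) \<and> (\<exists>u\<in>B (j + 1). E v u)) \<and>
     (\<forall>j<5. anticomplete E (B j) (B (j + 2))) \<and>
     (\<forall>j<5. \<not> (\<exists>a\<in>B j. \<exists>b\<in>B (j + 1). \<exists>c\<in>B (j + 1). \<exists>d\<in>B (j + 2). b \<noteq> c \<and>
          (\<exists>vs. set vs = {a, b, c, d} \<and> length vs = 4 \<and> induced_path V E vs)))"

definition blowup_vertices :: "(nat \<Rightarrow> 'a set) \<Rightarrow> 'a set" where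
  "blowup_vertices B = (\<Union>j<5. B j)"

definition supp :: "('a \<Rightarrow> 'a \<Rightarrow> bool) \<Rightarrow> (nat \<Rightarrow> 'a set) \<Rightarrow> 'a \<Rightarrow> nat set" where
  "supp E B v = {j. j < 5 \<and> (\<exists>u\<in>B j. E v u)}"

definition A2 :: "'a set \<Rightarrow> ('a \<Rightarrow> 'a \<Rightarrow> bool) \<Rightarrow> (nat \<Rightarrow> 'a set) \<Rightarrow> nat \<Rightarrow> 'a set" where
  "A2 V E B i = {v \<in> V - blowup_vertices B. supp E B v = {i mod 5, (i + 1) mod 5}}"

definition A3 :: "'a set \<Rightarrow> ('a \<Rightarrow> 'a \<Rightarrow> bool) \<Rightarrow> (nat \<Rightarrow> 'a set) \<Rightarrow> nat \<Rightarrow> 'a set" where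
  "A3 V E B j = {v \<in> V - blowup_vertices B.
      supp E B v = {(j + 4) mod 5, j mod 5, (j + 1) mod 5}}"

definition A3' :: "'a set \<Rightarrow> ('a \<Rightarrow> 'a \<Rightarrow> bool) \<Rightarrow> (nat \<Rightarrow> 'a set) \<Rightarrow> nat \<Rightarrow> 'a set" where
  "A3' V E B j = A3 V E B j \<union> B j"

definition nbhd_in :: "('a \<Rightarrow> 'a \<Rightarrow> bool) \<Rightarrow> 'a set \<Rightarrow> 'a \<Rightarrow> 'a set" where
  "nbhd_in E S v = {u \<in> S. E v u}"

end

theory Submission
  imports Defs
begin

text \<open>Suppose \<open>x \<in> A'\<^sub>3(j)\<close> is adjacent to \<open>a\<close> but not to \<open>b\<close>. Then \<open>x\<close> is not adjacent
  to \<open>c\<close> either, since otherwise \<open>a-b-c-x\<close> is an induced \<open>C\<^sub>4\<close>. Walking from \<open>x\<close> around the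
  blowup through the bags \<open>B(j\<plusminus>1), B(j\<plusminus>2), B(j\<plusminus>3)\<close>, in the direction pointing away
  from \<open>{i, i+1}\<close>, yields an induced path \<open>x-w-v-t\<close> whose vertices \<open>w, v, t\<close> lie outside the
  support of \<open>a, b, c\<close>. Hence \<open>t-v-w-x-a-b-c\<close> is an induced \<open>P\<^sub>7\<close>.\<close>

lemma graph_sym: "graph V E \<Longrightarrow> E x y \<Longrightarrow> E y x"
  unfolding graph_def by blast

lemma graph_irrefl: "graph V E \<Longrightarrow> \<not> E x x"
  unfolding graph_def by blast

lemma induced_path_3D:
  assumes "induced_path V E [a, b, c]"
  shows "E a b" "E b c" "\<not> E a c" "a \<noteq> c"
proof -
  have adj: "\<forall>p<3. \<forall>q<3. E ([a,b,c]!p) ([a,b,c]!q) \<longleftrightarrow> (p = q + 1 \<or> q = p + 1)"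
    and "distinct [a, b, c]"
    using assms unfolding induced_path_def by auto
  show "E a b" using adj[rule_format, of 0 1] by simp
  show "E b c" using adj[rule_format, of 1 2] by simp
  show "\<not> E a c" using adj[rule_format, of 0 2] by simp
  show "a \<noteq> c" using \<open>distinct [a, b, c]\<close> by simp
qed

lemma has_induced_P7I:
  assumes G: "graph V E" and "{t, v, w, x, a, b, c} \<subseteq> V"
    and "E t v" "E v w" "E w x" "E x a" "E a b" "E b c"
    and "\<not> E t w" "\<not> E t x" "\<not> E t a" "\<not> E t b" "\<not> E t c"
      "\<not> E v x" "\<not> E v a" "\<not> E v b" "\<not> E v c"
      "\<not> E w a" "\<not> E w b" "\<not> E w c" "\<not> E x b" "\<not> E x c" "\<not> E a c"
  shows "has_induced_P V E 7"
proof -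
  have E_commute: "E p q = E q p" for p q
    using graph_sym[OF G] by blast
  have "distinct [t, v, w, x, a, b, c]"
    using assms graph_irrefl[OF G] graph_sym[OF G] by auto
  moreover have "\<forall>p<7. \<forall>q<7. E ([t,v,w,x,a,b,c]!p) ([t,v,w,x,a,b,c]!q) \<longleftrightarrow> (p = q + 1 \<or> q = p + 1)"
    using assms graph_irrefl[OF G]
    by (simp add: less_Suc_eq numeral_eq_Suc all_conj_distrib E_commute)
  ultimately have "induced_path V E [t, v, w, x, a, b, c]"
    using assms(2) unfolding induced_path_def by simp
  then show ?thesis
    unfolding has_induced_P_def by (intro exI[of _ "[t, v, w, x, a, b, c]"]) simp
qed

lemma has_induced_C4I:
  assumes G: "graph V E" and "{a, b, c, x} \<subseteq> V"
    and "E a b" "E b c" "E c x" "E x a" "\<not> E a c" "\<not> E b x" "a \<noteq> c" "b \<noteq> x"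
  shows "has_induced_C V E 4"
proof -
  have E_commute: "E p q = E q p" for p q
    using graph_sym[OF G] by blast
  have all_less_4: "(\<forall>p<4. P p) \<longleftrightarrow> P 0 \<and> P 1 \<and> P 2 \<and> P 3" for P :: "nat \<Rightarrow> bool"
    by (auto simp: less_Suc_eq numeral_eq_Suc)
  have "distinct [a, b, c, x]"
    using assms graph_irrefl[OF G] graph_sym[OF G] by auto
  moreover have "\<forall>p<4. \<forall>q<4. E ([a,b,c,x]!p) ([a,b,c,x]!q) \<longleftrightarrow>
      (p = (q + 1) mod 4 \<or> q = (p + 1) mod 4) \<and> p \<noteq> q"
    unfolding all_less_4 using assms graph_irrefl[OF G] by (simp add: E_commute)
  ultimately have "induced_cycle V E [a, b, c, x]"
    using assms(2) unfolding induced_cycle_def by simp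
  then show ?thesis
    unfolding has_induced_C_def by (intro exI[of _ "[a, b, c, x]"]) simp
qed

lemma nice_blowup_C5_mod: "nice_blowup_C5 V E B \<Longrightarrow> B k = B (k mod 5)"
  unfolding nice_blowup_C5_def by blast

lemma nice_blowup_C5_cong: "nice_blowup_C5 V E B \<Longrightarrow> k mod 5 = l mod 5 \<Longrightarrow> B k = B l"
  by (metis nice_blowup_C5_mod)

lemma nice_blowup_C5_subset:
  assumes N: "nice_blowup_C5 V E B"
  shows "B k \<subseteq> V"
proof -
  have "k mod 5 < 5" by simp
  then have "B (k mod 5) \<subseteq> V"
    using N unfolding nice_blowup_C5_def by blast
  then show ?thesis using nice_blowup_C5_mod[OF N] by metis
qed

lemma nice_blowup_C5_neighbour_in_next_bag:
  assumes N: "nice_blowup_C5 V E B" and p: "p \<in> B k" and d: "d = 1 \<or> d = 4"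
  obtains u where "u \<in> B (k + d)" "E p u"
proof -
  have "p \<in> B (k mod 5)" using p nice_blowup_C5_mod[OF N] by blast
  moreover have "B (k mod 5 + d) = B (k + d)"
    by (rule nice_blowup_C5_cong[OF N]) presburger
  ultimately show ?thesis
    using N d that unfolding nice_blowup_C5_def
    by (metis mod_less_divisor zero_less_numeral)
qed

lemma nice_blowup_C5_anticomplete:
  assumes G: "graph V E" and N: "nice_blowup_C5 V E B" and "p \<in> B k" "q \<in> B l"
    and "(k + 2) mod 5 = l mod 5 \<or> (l + 2) mod 5 = k mod 5"
  shows "\<not> E p q"
proof -
  have "\<not> E p q" if "p \<in> B k" "q \<in> B l" "(k + 2) mod 5 = l mod 5" for p q k l
  proof -
    have "B l = B (k mod 5 + 2)"
      by (rule nice_blowup_C5_cong[OF N]) (use that(3) in presburger)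
    then have "p \<in> B (k mod 5)" "q \<in> B (k mod 5 + 2)"
      using that(1,2) nice_blowup_C5_mod[OF N] by auto
    then show ?thesis
      using N unfolding nice_blowup_C5_def anticomplete_def
      by (meson mod_less_divisor zero_less_numeral)
  qed
  then show ?thesis using assms graph_sym[OF G] by metis
qed

lemma not_adjacent_outside_supp:
  assumes N: "nice_blowup_C5 V E B" and "u \<in> B k" and "k mod 5 \<notin> supp E B v"
  shows "\<not> E v u"
  using assms nice_blowup_C5_mod[OF N, of k] unfolding supp_def by auto

lemma adjacent_in_supp:
  assumes N: "nice_blowup_C5 V E B" and "k mod 5 \<in> supp E B v"
  obtains u where "u \<in> B k" "E v u"
  using assms nice_blowup_C5_mod[OF N, of k] unfolding supp_def by auto

lemma A2_not_adjacent:
  assumes N: "nice_blowup_C5 V E B" and "a \<in> A2 V E B i" and "u \<in> B k"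
    and "k mod 5 \<noteq> i mod 5" "k mod 5 \<noteq> (i + 1) mod 5"
  shows "\<not> E a u"
  using assms not_adjacent_outside_supp[OF N] unfolding A2_def by auto

lemma A3'_cases:
  assumes "x \<in> A3' V E B j"
  obtains "x \<in> B j" | "supp E B x = {(j + 4) mod 5, j mod 5, (j + 1) mod 5}"
  using assms unfolding A3'_def A3_def by auto

lemma mod_5_cases:
  fixes j :: nat
  obtains "j mod 5 = 0" | "j mod 5 = 1" | "j mod 5 = 2" | "j mod 5 = 3" | "j mod 5 = 4"
  by linarith

text \<open>Here \<open>d = 1\<close> walks forwards and \<open>d = 4\<close> backwards around the cycle.\<close>

lemma A3'_induced_path_around:
  assumes G: "graph V E" and N: "nice_blowup_C5 V E B"
    and x: "x \<in> A3' V E B j" and d: "d = 1 \<or> d = 4"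
  obtains w v t where "w \<in> B (j + d)" "v \<in> B (j + d + d)" "t \<in> B (j + d + d + d)"
    "E x w" "E w v" "E v t" "\<not> E x v" "\<not> E x t" "\<not> E w t"
proof -
  let ?S = "{(j + 4) mod 5, j mod 5, (j + 1) mod 5}"
  note mod_j = mod_add_left_eq[of j, symmetric] mod_add_right_eq[of _ j, symmetric] mod_Suc
  have in_S: "(j + d) mod 5 \<in> ?S"
    and out_S: "(j + d + d) mod 5 \<notin> ?S" "(j + d + d + d) mod 5 \<notin> ?S"
    and two_apart: "(j + 2) mod 5 = (j + d + d) mod 5 \<or> (j + d + d + 2) mod 5 = j mod 5"
      "(j + 2) mod 5 = (j + d + d + d) mod 5 \<or> (j + d + d + d + 2) mod 5 = j mod 5"
      "(j + d + 2) mod 5 = (j + d + d + d) mod 5 \<or> (j + d + d + d + 2) mod 5 = (j + d) mod 5"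
    using d by (elim disjE; cases rule: mod_5_cases[of j]; simp add: mod_j)+
  obtain w where w: "w \<in> B (j + d)" "E x w"
    using x
  proof (cases rule: A3'_cases)
    case 1
    then show ?thesis using nice_blowup_C5_neighbour_in_next_bag[OF N _ d] that by blast
  next
    case 2
    then show ?thesis using in_S adjacent_in_supp[OF N] that by metis
  qed
  obtain v where v: "v \<in> B (j + d + d)" "E w v"
    using nice_blowup_C5_neighbour_in_next_bag[OF N w(1) d] by blast
  obtain t where t: "t \<in> B (j + d + d + d)" "E v t"
    using nice_blowup_C5_neighbour_in_next_bag[OF N v(1) d] by blast
  have "\<not> E x v \<and> \<not> E x t"
    using x
  proof (cases rule: A3'_cases)
    case 1
    then show ?thesis using nice_blowup_C5_anticomplete[OF G N 1] v(1) t(1) two_apart by blast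
  next
    case 2
    then show ?thesis using not_adjacent_outside_supp[OF N] v(1) t(1) out_S by metis
  qed
  moreover have "\<not> E w t"
    using nice_blowup_C5_anticomplete[OF G N w(1) t(1)] two_apart(3) by blast
  ultimately show ?thesis using that w v t by blast
qed

lemma A2_path_end_neighbour_adjacent_middle:
  assumes G: "graph V E" and no_P7: "\<not> has_induced_P V E 7"
    and no_C4: "\<not> has_induced_C V E 4" and N: "nice_blowup_C5 V E B"
    and A2: "a \<in> A2 V E B i" "b \<in> A2 V E B i" "c \<in> A2 V E B i"
    and path: "E a b" "E b c" "\<not> E a c" "a \<noteq> c"
    and j: "j \<in> {i, i + 1}" and x: "x \<in> A3' V E B j" and "E a x"
  shows "E b x"
proof (rule ccontr)
  assume "\<not> E b x"
  have E_commute: "E p q \<longleftrightarrow> E q p" for p q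
    using graph_sym[OF G] by blast
  \<comment> \<open>walk away from the support \<open>{i, i+1}\<close> of \<open>a, b, c\<close>\<close>
  obtain d :: nat where d: "d = 4 \<and> j = i \<or> d = 1 \<and> j = i + 1" using j by auto
  then obtain w v t where wvt: "w \<in> B (j + d)" "v \<in> B (j + d + d)" "t \<in> B (j + d + d + d)"
    and path_x: "E x w" "E w v" "E v t" "\<not> E x v" "\<not> E x t" "\<not> E w t"
    using A3'_induced_path_around[OF G N x] by metis
  have outside: "k mod 5 \<noteq> i mod 5 \<and> k mod 5 \<noteq> (i + 1) mod 5"
    if "k \<in> {j + d, j + d + d, j + d + d + d}" for k
  proof -
    note mod_i = mod_add_left_eq[of i, symmetric] mod_add_right_eq[of _ i, symmetric] mod_Suc
    show ?thesis
      using that d by (elim insertE emptyE disjE conjE; cases rule: mod_5_cases[of i]; simp add: mod_i)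
  qed
  have far: "\<not> E p u" if "p \<in> {a, b, c}" "u \<in> {w, v, t}" for p u
    using that A2 wvt outside A2_not_adjacent[OF N] by blast
  have "b \<noteq> x" using far path_x(1) by blast
  have V: "{t, v, w, x, a, b, c} \<subseteq> V"
    using wvt x A2 nice_blowup_C5_subset[OF N]
    unfolding A2_def A3'_def A3_def by blast
  have "\<not> E c x"
  proof
    assume "E c x"
    have "has_induced_C V E 4"
      by (rule has_induced_C4I[OF G, of a b c x])
        (use V path \<open>E a x\<close> \<open>E c x\<close> \<open>\<not> E b x\<close> \<open>b \<noteq> x\<close> in \<open>simp_all add: E_commute\<close>)
    then show False using no_C4 by blast
  qed
  have "has_induced_P V E 7"
    by (rule has_induced_P7I[OF G V])
      (use path path_x \<open>E a x\<close> \<open>\<not> E b x\<close> \<open>\<not> E c x\<close> far in \<open>simp_all add: E_commute\<close>)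
  then show False using no_P7 by blast
qed

theorem lemma7p3:
  fixes V :: "'a set" and E :: "'a \<Rightarrow> 'a \<Rightarrow> bool" and B :: "nat \<Rightarrow> 'a set"
    and i :: nat and a b c :: 'a
  assumes "graph V E"
    and "\<not> has_induced_P V E 7"
    and "\<not> has_induced_C V E 4"
    and "\<not> has_induced_C V E 6"
    and "\<not> has_induced_C V E 7"
    and "nice_blowup_C5 V E B"
    and "i < 5"
    and "a \<in> A2 V E B i" and "b \<in> A2 V E B i" and "c \<in> A2 V E B i"
    and "induced_path V E [a, b, c]"
  shows "\<forall>j \<in> {i, i + 1}.
           nbhd_in E (A3' V E B j) a \<subseteq> nbhd_in E (A3' V E B j) b \<and>
           nbhd_in E (A3' V E B j) c \<subseteq> nbhd_in E (A3' V E B j) b"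
proof -
  note path = induced_path_3D[OF assms(11)]
  have reversed_path: "E c b" "E b a" "\<not> E c a" "c \<noteq> a"
    using graph_sym[OF assms(1)] path by auto
  have "E b x" if "j \<in> {i, i + 1}" "x \<in> A3' V E B j" "E a x" for j x
    using A2_path_end_neighbour_adjacent_middle[OF assms(1-3,6,8-10) path that] .
  moreover have "E b x" if "j \<in> {i, i + 1}" "x \<in> A3' V E B j" "E c x" for j x
    using A2_path_end_neighbour_adjacent_middle[OF assms(1-3,6,10,9,8) reversed_path that] .
  ultimately show ?thesis unfolding nbhd_in_def by blast
qed

end
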